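(* Let $\gamma$ be a closed path in $E(\mathbb C)$, avoiding $E(\mathbb Q)$, whose homology class generates $H_1(E(\mathbb C),\mathbb Z)^-$. Then $$\int_\gamma\eta(x_1,y_1)=-7\int_\gamma\eta(x,y),\qquad \int_\gamma\eta(x_2,y_2)=-5\int_\gamma\eta(x,y).$$
   Context: Let $E$ be the elliptic curve $y^2+y=x^3-x$ over $\mathbb Q$. On $E$, define the functions $x_1=x-1$, $y_1=y-2x+2$, $x_2=x-1$ and $y_2=-x+y+1$. Here $E(\mathbb Q)$ is generated by $(0,0)$, and the zeros and poles of all six functions $x,y,x_1,y_1,x_2,y_2$ lie in $E(\mathbb Q)$. For nonconstant functions $f,g$ on $E$, let $\eta(f,g)=\log|f|\,d\arg g-\log|g|\,d\arg f$. This is a real $1$-form on $E(\mathbb C)$ minus the zeros and poles of $f$ and $g$. $H_1(E(\mathbb C),\mathbb Z)^-$ denotes the subgroup of $H_1(E(\mathbb C),\mathbb Z)$ on which complex conjugation acts by $-1$. For each of the pairs $(f,g)=(x,y),(x_1,y_1),(x_2,y_2)$, the integral $\int_\gamma\eta(f,g)$ depends only on the homology class of $\gamma$ in $E(\mathbb C)$. The orientation of $\gamma$ is fixed once, and the same $\gamma$ is used on both sides of each identity. *)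

theory Defs
  imports "HOL-Analysis.Analysis" "HOL-Homology.Homology"
begin

definition E_aff :: "(complex \<times> complex) set" where
  "E_aff = {(x, y). y^2 + y = x^3 - x}"

text \<open>Affine rational points of E (E(Q) minus the point at infinity).\<close>
definition E_rat :: "(complex \<times> complex) set" where
  "E_rat = {(x, y). (x, y) \<in> E_aff \<and> x \<in> \<rat> \<and> y \<in> \<rat>}"

definition E_top :: "(complex \<times> complex) topology" where
  "E_top = subtopology euclidean E_aff"

definition conjE :: "complex \<times> complex \<Rightarrow> complex \<times> complex" where
  "conjE p = (cnj (fst p), cnj (snd p))"

definition fx :: "complex \<times> complex \<Rightarrow> complex" where "fx p = fst p"
definition fy :: "complex \<times> complex \<Rightarrow> complex" where "fy p = snd p"
definition fx1 :: "complex \<times> complex \<Rightarrow> complex" where "fx1 p = fst p - 1"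
definition fy1 :: "complex \<times> complex \<Rightarrow> complex" where "fy1 p = snd p - 2 * fst p + 2"
definition fx2 :: "complex \<times> complex \<Rightarrow> complex" where "fx2 p = fst p - 1"
definition fy2 :: "complex \<times> complex \<Rightarrow> complex" where "fy2 p = - fst p + snd p + 1"

text \<open>Line integral of eta(f,g) = log|f| d arg g - log|g| d arg f along a path
  gamma parametrised on [0,1]; d arg h = Im (dh / h).\<close>
definition eta_integral ::
  "(complex \<times> complex \<Rightarrow> complex) \<Rightarrow> (complex \<times> complex \<Rightarrow> complex) \<Rightarrow>
   (real \<Rightarrow> complex \<times> complex) \<Rightarrow> real" where
  "eta_integral f g \<gamma> = integral {0..1} (\<lambda>t.
      ln (cmod (f (\<gamma> t))) * Im (vector_derivative (g \<circ> \<gamma>) (at t) / g (\<gamma> t))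
    - ln (cmod (g (\<gamma> t))) * Im (vector_derivative (f \<circ> \<gamma>) (at t) / f (\<gamma> t)))"

text \<open>The singular 1-simplex traced out by a path gamma : [0,1] -> X
  (vertex e_0 goes to gamma 0, vertex e_1 to gamma 1).\<close>
definition path_simplex :: "(real \<Rightarrow> 'a) \<Rightarrow> (nat \<Rightarrow> real) \<Rightarrow> 'a" where
  "path_simplex \<gamma> = restrict (\<lambda>v. \<gamma> (v 1)) (standard_simplex 1)"

definition loop_class :: "'a topology \<Rightarrow> (real \<Rightarrow> 'a) \<Rightarrow> 'a chain set" where
  "loop_class X \<gamma> = homologous_rel_set 1 X {} (frag_of (path_simplex \<gamma>))"

definition H1_minus :: "(complex \<times> complex) chain set set" where
  "H1_minus = {a \<in> carrier (homology_group 1 E_top).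
      hom_induced 1 E_top {} E_top {} conjE a = inv\<^bsub>homology_group 1 E_top\<^esub> a}"

end

theory Submission
  imports Defs "HOL-Complex_Analysis.Complex_Analysis"
begin

(* If 1 - f = g, the form eta(f, g) is exact: it is dD(f), where D is the Bloch-Wigner
   dilogarithm, a continuous function on C - {0, 1}.  On E, the functions x, y, x1, y1, y2 and
   the lines x + 1, x - 2, x + y, 2x + y - 1, y + 1, x + y + 1 have all their zeros and poles in
   E(Q), and the curve equation yields multiplicative relations among them.  Using these,
   {x1, y1} + 7 {x, y} and {x2, y2} + 5 {x, y} are integral combinations of Steinberg symbols
   {f, 1 - f}, up to symbols of the constants 2 and 3 which cancel.  Hence
   eta(x1, y1) + 7 eta(x, y) and eta(x2, y2) + 5 eta(x, y) have explicit primitives on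
   E(C) - E(Q), and their integrals over every closed path avoiding E(Q) vanish. *)

section \<open>The Bloch--Wigner dilogarithm\<close>

lemma has_real_derivative_Im:
  "(f has_vector_derivative f') (at t) \<Longrightarrow> ((\<lambda>s. Im (f s)) has_real_derivative Im f') (at t)"
  unfolding has_real_derivative_iff_has_vector_derivative
  by (rule bounded_linear.has_vector_derivative[OF bounded_linear_Im])

lemma has_real_derivative_ln_cmod:
  assumes q: "(q has_vector_derivative q') (at t)" and nz: "q t \<noteq> 0"
  shows "((\<lambda>s. ln (cmod (q s))) has_real_derivative Re (q' / q t)) (at t)"
proof -
  have "((\<lambda>s. cmod (q s)) has_real_derivative sgn (q t) \<bullet> q') (at t)"
    using has_derivative_compose[OF q[unfolded has_vector_derivative_def] has_derivative_norm[OF nz]]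
    by (simp add: has_real_derivative_iff_has_vector_derivative has_vector_derivative_def o_def inner_commute)
  from DERIV_chain2[OF DERIV_ln_divide this] nz
  have "((\<lambda>s. ln (cmod (q s))) has_real_derivative (sgn (q t) \<bullet> q') / cmod (q t)) (at t)"
    by simp
  moreover have "(sgn (q t) \<bullet> q') / cmod (q t) = Re (q' / q t)"
    using nz by (simp add: sgn_div_norm inner_complex_def Re_divide field_simps cmod_power2 flip: power2_eq_square)
  ultimately show ?thesis by simp
qed

definition cut_plane :: "complex set" where
  "cut_plane = - complex_of_real ` {1..}"

lemma mem_cut_plane_iff: "z \<in> cut_plane \<longleftrightarrow> 1 - z \<notin> \<real>\<^sub>\<le>\<^sub>0"
  by (auto simp: cut_plane_def complex_slot_right_eq complex_nonpos_Reals_iff)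

lemma open_cut_plane: "open cut_plane"
  unfolding cut_plane_def complex_slot_right_eq
  by (intro open_Compl closed_Collect_conj closed_Collect_le closed_Collect_eq continuous_intros)

definition dilog_deriv :: "complex \<Rightarrow> complex" where
  "dilog_deriv z = (if z = 0 then 1 else - Ln (1 - z) / z)"

lemma dilog_deriv_holomorphic: "dilog_deriv holomorphic_on cut_plane - {0}"
proof -
  have "(\<lambda>z. - Ln (1 - z) / z) holomorphic_on cut_plane - {0}"
    by (intro holomorphic_intros) (auto simp: mem_cut_plane_iff)
  then show ?thesis
    by (rule holomorphic_transform) (simp add: dilog_deriv_def)
qed

lemma isCont_dilog_deriv_0: "isCont dilog_deriv 0"
proof -
  have "((\<lambda>z. Ln (1 - z)) has_field_derivative -1) (at 0)"
    by (auto intro!: derivative_eq_intros)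
  then have "((\<lambda>z. Ln (1 - z) / z) \<longlongrightarrow> -1) (at 0)"
    using has_field_derivativeD by force
  then have "((\<lambda>z. - (Ln (1 - z) / z)) \<longlongrightarrow> 1) (at 0)"
    using tendsto_minus by fastforce
  then have "(dilog_deriv \<longlongrightarrow> 1) (at 0)"
    by (rule Lim_transform_eventually) (auto simp: dilog_deriv_def eventually_at_filter)
  then show ?thesis
    by (simp add: continuous_at dilog_deriv_def)
qed

lemma continuous_on_dilog_deriv: "continuous_on cut_plane dilog_deriv"
proof (intro continuous_at_imp_continuous_on ballI)
  fix z assume "z \<in> cut_plane"
  show "isCont dilog_deriv z"
  proof (cases "z = 0")
    case False
    with \<open>z \<in> cut_plane\<close> show ?thesis
      using dilog_deriv_holomorphic open_cut_plane
      by (meson DiffI continuous_on_eq_continuous_at holomorphic_on_imp_continuous_on open_delete singletonD)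
  qed (simp add: isCont_dilog_deriv_0)
qed

(* A primitive of -Ln (1 - z) / z, i.e. Li_2 up to an additive constant left unspecified by SOME;
   the constant only shifts bloch_wigner by a constant. *)
definition dilog :: "complex \<Rightarrow> complex" where
  "dilog = (SOME L. \<forall>z\<in>cut_plane. (L has_field_derivative dilog_deriv z) (at z))"

lemma has_field_derivative_dilog:
  assumes "z \<in> cut_plane"
  shows "(dilog has_field_derivative dilog_deriv z) (at z)"
proof -
  have "\<exists>L. \<forall>z\<in>cut_plane. (L has_field_derivative dilog_deriv z) (at z)"
  proof (rule holomorphic_starlike_primitive[OF continuous_on_dilog_deriv _ open_cut_plane])
    show "starlike cut_plane"
      unfolding cut_plane_def by (rule starlike_slotted_complex_plane_right)
    show "finite {0 :: complex}"
      by simp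
    show "dilog_deriv field_differentiable at z" if "z \<in> cut_plane - {0}" for z
      using dilog_deriv_holomorphic open_cut_plane that
      by (meson holomorphic_on_imp_differentiable_at open_delete)
  qed
  then show ?thesis
    using assms someI_ex[of "\<lambda>L. \<forall>z\<in>cut_plane. (L has_field_derivative dilog_deriv z) (at z)"]
    unfolding dilog_def by (metis (no_types, lifting))
qed

lemma dilog_reflection:
  assumes "z \<in> cut_plane" "1 - z \<in> cut_plane"
  shows "dilog z + dilog (1 - z) + Ln z * Ln (1 - z) = 2 * dilog (1/2) + Ln (1/2) ^ 2"
proof -
  define K where "K z = dilog z + dilog (1 - z) + Ln z * Ln (1 - z)" for z
  define S where "S = - complex_of_real ` ({..0} \<union> {1..})"
  have S_iff: "w \<in> S \<longleftrightarrow> w \<in> cut_plane \<and> 1 - w \<in> cut_plane" for w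
    by (auto simp: S_def mem_cut_plane_iff complex_double_slot_eq complex_nonpos_Reals_iff)
  have "(K has_field_derivative 0) (at w)" if "w \<in> S" for w
  proof -
    have w: "w \<in> cut_plane" "1 - w \<in> cut_plane" "w \<noteq> 0" "w \<noteq> 1"
      using that by (auto simp: S_iff mem_cut_plane_iff)
    have "(K has_field_derivative dilog_deriv w - dilog_deriv (1 - w)
            - Ln w / (1 - w) + Ln (1 - w) / w) (at w)"
      unfolding K_def using w
      by (auto intro!: derivative_eq_intros DERIV_chain2[OF has_field_derivative_dilog]
               simp: mem_cut_plane_iff field_simps)
    then show ?thesis
      using w by (simp add: dilog_deriv_def)
  qed
  moreover have "open S" "connected S"
    using starlike_doubly_slotted_complex_plane[of 0 1]
    by (auto simp: S_def starlike_imp_connected intro!: open_Compl closed_injective_linear_image inj_of_real)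
  moreover have "z \<in> S" "1/2 \<in> S"
    using assms by (auto simp: S_iff mem_cut_plane_iff complex_nonpos_Reals_iff)
  ultimately have "K z = K (1/2)"
    using DERIV_zero_connected_constant[of S "{}" K] DERIV_isCont
    by (metis continuous_at_imp_continuous_on empty_iff finite.emptyI Diff_empty)
  then show ?thesis
    by (simp add: K_def power2_eq_square)
qed

lemma eventually_nhds_in_open_isCont:
  "isCont q t \<Longrightarrow> open S \<Longrightarrow> q t \<in> S \<Longrightarrow> eventually (\<lambda>s. q s \<in> S) (nhds t)"
  by (auto simp: isCont_def tendsto_at_iff_tendsto_nhds dest: topological_tendstoD)

definition bloch_wigner_cut :: "complex \<Rightarrow> real" where
  "bloch_wigner_cut z = Im (dilog z) + Im (Ln (1 - z)) * ln (cmod z)"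

lemma bloch_wigner_cut_reflection:
  assumes "z \<in> cut_plane" "1 - z \<in> cut_plane"
  shows "bloch_wigner_cut z + bloch_wigner_cut (1 - z) = 2 * Im (dilog (1/2))"
proof -
  have "z \<noteq> 0" "1 - z \<noteq> 0"
    using assms by (auto simp: mem_cut_plane_iff)
  moreover have "Ln (1/2) = of_real (ln (1/2))"
    by (simp flip: Ln_of_real)
  ultimately show ?thesis
    using arg_cong[OF dilog_reflection[OF assms], of Im]
    by (simp add: bloch_wigner_cut_def Re_Ln algebra_simps)
qed

(* Up to an additive constant this is the Bloch-Wigner function Im Li_2(z) + arg (1 - z) log |z|;
   across the cut [1, \<infinity>) the reflection z \<mapsto> 1 - z continues it to C - {0, 1}. *)
definition bloch_wigner :: "complex \<Rightarrow> real" where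
  "bloch_wigner z = (if z \<in> cut_plane then bloch_wigner_cut z
                     else 2 * Im (dilog (1/2)) - bloch_wigner_cut (1 - z))"

lemma bloch_wigner_eq_reflection:
  "1 - z \<in> cut_plane \<Longrightarrow> bloch_wigner z = 2 * Im (dilog (1/2)) - bloch_wigner_cut (1 - z)"
  using bloch_wigner_cut_reflection[of z] by (auto simp: bloch_wigner_def algebra_simps)

lemma has_real_derivative_bloch_wigner_cut:
  assumes q: "(q has_vector_derivative q') (at t)" and "q t \<in> cut_plane" "q t \<noteq> 0"
  shows "((\<lambda>s. bloch_wigner_cut (q s)) has_real_derivative
           ln (cmod (q t)) * Im (- q' / (1 - q t)) - ln (cmod (1 - q t)) * Im (q' / q t)) (at t)"
proof -
  have "1 - q t \<notin> \<real>\<^sub>\<le>\<^sub>0" "1 - q t \<noteq> 0"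
    using assms(2) by (auto simp: mem_cut_plane_iff)
  have "((\<lambda>s. Im (dilog (q s))) has_real_derivative Im (q' * dilog_deriv (q t))) (at t)"
    using has_real_derivative_Im[OF field_vector_diff_chain_at[OF q has_field_derivative_dilog[OF assms(2)]]]
    by (simp add: o_def)
  moreover have "((\<lambda>s. Im (Ln (1 - q s))) has_real_derivative Im (- q' / (1 - q t))) (at t)"
    using has_real_derivative_Im[OF field_vector_diff_chain_at[OF has_vector_derivative_diff[OF has_vector_derivative_const q]
        has_field_derivative_Ln[OF \<open>1 - q t \<notin> \<real>\<^sub>\<le>\<^sub>0\<close>]]]
    by (simp add: o_def divide_inverse)
  ultimately have d: "((\<lambda>s. bloch_wigner_cut (q s)) has_real_derivative Im (q' * dilog_deriv (q t))
      + (Im (- q' / (1 - q t)) * ln (cmod (q t)) + Re (q' / q t) * Im (Ln (1 - q t)))) (at t)"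
    unfolding bloch_wigner_cut_def
    by (intro DERIV_add DERIV_mult has_real_derivative_ln_cmod[OF q \<open>q t \<noteq> 0\<close>])
  have "Im (q' * dilog_deriv (q t))
      = - ln (cmod (1 - q t)) * Im (q' / q t) - Im (Ln (1 - q t)) * Re (q' / q t)"
  proof -
    have "q' * dilog_deriv (q t) = - (Ln (1 - q t) * (q' / q t))"
      using \<open>q t \<noteq> 0\<close> by (simp add: dilog_deriv_def)
    then show ?thesis
      using \<open>1 - q t \<noteq> 0\<close> by (simp add: Re_Ln del: times_divide_eq_right)
  qed
  then show ?thesis
    by (intro DERIV_cong[OF d]) (simp add: algebra_simps)
qed

lemma has_real_derivative_bloch_wigner:
  assumes q: "(q has_vector_derivative q') (at t)" and "q t \<noteq> 0" "q t \<noteq> 1"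
  shows "((\<lambda>s. bloch_wigner (q s)) has_real_derivative
           ln (cmod (q t)) * Im (- q' / (1 - q t)) - ln (cmod (1 - q t)) * Im (q' / q t)) (at t)"
proof (cases "q t \<in> cut_plane")
  case True
  have "eventually (\<lambda>s. q s \<in> cut_plane) (nhds t)"
    using q True open_cut_plane
    by (intro eventually_nhds_in_open_isCont has_vector_derivative_continuous)
  then have "eventually (\<lambda>s. bloch_wigner_cut (q s) = bloch_wigner (q s)) (nhds t)"
    by (rule eventually_mono) (simp add: bloch_wigner_def)
  moreover note has_real_derivative_bloch_wigner_cut[OF q True \<open>q t \<noteq> 0\<close>]
  ultimately show ?thesis
    by (rule DERIV_cong_ev[OF refl _ refl, THEN iffD1])
next
  case False
  then have cut: "1 - q t \<in> cut_plane"
    using assms(2,3) by (auto simp: mem_cut_plane_iff complex_nonpos_Reals_iff)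
  have q1: "((\<lambda>s. 1 - q s) has_vector_derivative - q') (at t)"
    using has_vector_derivative_diff[OF has_vector_derivative_const q] by simp
  have "eventually (\<lambda>s. 1 - q s \<in> cut_plane) (nhds t)"
    using q1 cut open_cut_plane
    by (intro eventually_nhds_in_open_isCont has_vector_derivative_continuous)
  then have "eventually (\<lambda>s. 2 * Im (dilog (1/2)) - bloch_wigner_cut (1 - q s) = bloch_wigner (q s)) (nhds t)"
    by (rule eventually_mono) (simp add: bloch_wigner_eq_reflection)
  moreover have "((\<lambda>s. 2 * Im (dilog (1/2)) - bloch_wigner_cut (1 - q s)) has_real_derivative
           ln (cmod (q t)) * Im (- q' / (1 - q t)) - ln (cmod (1 - q t)) * Im (q' / q t)) (at t)"
    using DERIV_diff[OF DERIV_const has_real_derivative_bloch_wigner_cut[OF q1 cut]] assms(3)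
    by (simp add: algebra_simps)
  ultimately show ?thesis
    by (rule DERIV_cong_ev[OF refl _ refl, THEN iffD1])
qed

lemma isCont_bloch_wigner_cut:
  assumes "z \<in> cut_plane" "z \<noteq> 0"
  shows "isCont bloch_wigner_cut z"
proof -
  have "isCont dilog z"
    using has_field_derivative_dilog[OF assms(1)] DERIV_isCont by blast
  moreover have "isCont (\<lambda>w. Ln (1 - w)) z"
    using assms(1) by (intro continuous_intros isCont_Ln') (auto simp: mem_cut_plane_iff)
  ultimately show ?thesis
    unfolding bloch_wigner_cut_def using assms(2) by (intro continuous_intros) auto
qed

lemma continuous_on_bloch_wigner: "continuous_on (- {0, 1}) bloch_wigner"
proof (intro continuous_at_imp_continuous_on ballI)
  fix z :: complex assume z: "z \<in> - {0, 1}"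
  show "isCont bloch_wigner z"
  proof (cases "z \<in> cut_plane")
    case True
    have "eventually (\<lambda>w. bloch_wigner_cut w = bloch_wigner w) (nhds z)"
      using eventually_nhds_in_open[OF open_cut_plane True]
      by (rule eventually_mono) (simp add: bloch_wigner_def)
    with isCont_bloch_wigner_cut[OF True] z show ?thesis
      using isCont_cong[THEN iffD1] by blast
  next
    case False
    then have cut: "1 - z \<in> cut_plane"
      using z by (auto simp: mem_cut_plane_iff complex_nonpos_Reals_iff)
    have "eventually (\<lambda>w. 1 - w \<in> cut_plane) (nhds z)"
      using cut open_cut_plane by (intro eventually_nhds_in_open_isCont continuous_intros)
    then have "eventually (\<lambda>w. 2 * Im (dilog (1/2)) - bloch_wigner_cut (1 - w) = bloch_wigner w) (nhds z)"
      by (rule eventually_mono) (simp add: bloch_wigner_eq_reflection)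
    moreover have "isCont (\<lambda>w. 2 * Im (dilog (1/2)) - bloch_wigner_cut (1 - w)) z"
      using isCont_bloch_wigner_cut[OF cut] z
      by (intro continuous_intros continuous_at_compose[unfolded o_def, where f = "\<lambda>w. 1 - w"]) auto
    ultimately show ?thesis
      by (rule isCont_cong[THEN iffD1])
  qed
qed

lemma continuous_on_bloch_wigner_compose [continuous_intros]:
  assumes "continuous_on S f" "\<And>p. p \<in> S \<Longrightarrow> f p \<noteq> 0" "\<And>p. p \<in> S \<Longrightarrow> f p \<noteq> 1"
  shows "continuous_on S (\<lambda>p. bloch_wigner (f p))"
  by (rule continuous_on_compose2[OF continuous_on_bloch_wigner assms(1)]) (use assms(2,3) in auto)

section \<open>Logarithmic data along a path\<close>

(* The pair (log |u|, d arg u) at t.  Along a path, the integrand of eta(f, g) is the wedge of the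
   pairs of f and g, and log_data turns products into sums. *)
definition log_data :: "(real \<Rightarrow> complex) \<Rightarrow> real \<Rightarrow> real \<times> real" where
  "log_data u t = (ln (cmod (u t)), Im (vector_derivative u (at t) / u t))"

definition wedge :: "real \<times> real \<Rightarrow> real \<times> real \<Rightarrow> real" where
  "wedge a b = fst a * snd b - snd a * fst b"

lemma log_data_const [simp]: "log_data (\<lambda>s. c) t = (ln (cmod c), 0)"
  by (simp add: log_data_def vector_derivative_const_at)

lemma log_data_cong:
  assumes "eventually (\<lambda>s. u s = v s) (nhds t)"
  shows "log_data u t = log_data v t"
proof -
  have "vector_derivative u (at t) = vector_derivative v (at t)"
    using assms by (intro vector_derivative_cong_eq) (auto elim: eventually_mono)
  moreover have "u t = v t"
    using assms eventually_nhds_x_imp_x by blast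
  ultimately show ?thesis
    by (simp add: log_data_def)
qed

lemma log_data_mult:
  assumes "u differentiable (at t)" "v differentiable (at t)" "u t \<noteq> 0" "v t \<noteq> 0"
  shows "log_data (\<lambda>s. u s * v s) t = log_data u t + log_data v t"
proof -
  have "vector_derivative (\<lambda>s. u s * v s) (at t)
          = u t * vector_derivative v (at t) + vector_derivative u (at t) * v t"
    using assms(1,2) by (intro vector_derivative_at has_vector_derivative_mult)
                        (simp_all add: vector_derivative_works[symmetric])
  then have "vector_derivative (\<lambda>s. u s * v s) (at t) / (u t * v t)
      = vector_derivative u (at t) / u t + vector_derivative v (at t) / v t"
    using assms(3,4) by (simp add: field_simps)
  then show ?thesis
    using assms(3,4) by (simp add: log_data_def norm_mult ln_mult)
qed

lemma log_data_inverse: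
  assumes "u differentiable (at t)" "u t \<noteq> 0"
  shows "log_data (\<lambda>s. inverse (u s)) t = - log_data u t"
proof -
  have "vector_derivative (\<lambda>s. inverse (u s)) (at t)
          = vector_derivative u (at t) * - (inverse (u t) * inverse (u t))"
    using field_vector_diff_chain_at[OF assms(1)[unfolded vector_derivative_works] DERIV_inverse[OF assms(2)]]
    by (intro vector_derivative_at) (simp add: o_def power2_eq_square)
  then have "vector_derivative (\<lambda>s. inverse (u s)) (at t) / inverse (u t)
      = - (vector_derivative u (at t) / u t)"
    using assms(2) by (simp add: field_simps)
  then show ?thesis
    using assms(2) by (simp add: log_data_def norm_inverse ln_inverse)
qed

lemma log_data_scaled_quotient:
  assumes "u differentiable (at t)" "w differentiable (at t)" "c \<noteq> 0" "u t \<noteq> 0" "w t \<noteq> 0"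
  shows "log_data (\<lambda>s. c * u s / w s) t = (ln (cmod c), 0) + log_data u t - log_data w t"
  using assms
  by (simp add: divide_inverse log_data_mult log_data_inverse del: inverse_eq_divide)

lemma has_real_derivative_bloch_wigner_log_data:
  assumes "q differentiable (at t)" "q t \<noteq> 0" "q t \<noteq> 1"
  shows "((\<lambda>s. bloch_wigner (q s)) has_real_derivative
           wedge (log_data q t) (log_data (\<lambda>s. 1 - q s) t)) (at t)"
proof -
  have q: "(q has_vector_derivative vector_derivative q (at t)) (at t)"
    using assms(1) by (simp add: vector_derivative_works[symmetric])
  then have "vector_derivative (\<lambda>s. 1 - q s) (at t) = - vector_derivative q (at t)"
    by (intro vector_derivative_at) (auto intro!: derivative_eq_intros)
  with has_real_derivative_bloch_wigner[OF q assms(2,3)] show ?thesis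
    by (simp add: log_data_def wedge_def algebra_simps)
qed

lemma has_real_derivative_bloch_wigner_steinberg:
  assumes u: "u differentiable (at t)" and v: "v differentiable (at t)"
    and nz: "\<alpha> \<noteq> 0" "\<beta> \<noteq> 0" "u t \<noteq> 0" "v t \<noteq> 0" "w t \<noteq> 0"
    and w: "\<And>s. w s = \<alpha> * u s + \<beta> * v s"
    and q: "\<And>s. q s = \<alpha> * u s / w s"
  shows "((\<lambda>s. bloch_wigner (q s)) has_real_derivative
           wedge ((ln (cmod \<alpha>), 0) + log_data u t - log_data w t)
                 ((ln (cmod \<beta>), 0) + log_data v t - log_data w t)) (at t)"
proof -
  have w_diff: "w differentiable (at t)"
    using u v by (simp add: w[abs_def])
  have "eventually (\<lambda>s. w s \<in> - {0}) (nhds t)"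
    using nz(5) differentiable_imp_continuous_within[OF w_diff]
    by (intro eventually_nhds_in_open_isCont) auto
  then have "eventually (\<lambda>s. \<beta> * v s / w s = 1 - q s) (nhds t)"
    by (rule eventually_mono) (simp add: q w field_simps)
  then have "log_data (\<lambda>s. 1 - q s) t = (ln (cmod \<beta>), 0) + log_data v t - log_data w t"
    using log_data_cong log_data_scaled_quotient[OF v w_diff nz(2,4,5)] by metis
  moreover have "log_data q t = (ln (cmod \<alpha>), 0) + log_data u t - log_data w t"
    using log_data_scaled_quotient[OF u w_diff nz(1,3,5)] by (simp add: q[abs_def])
  moreover have "q differentiable (at t)"
    using u w_diff nz(5) by (simp add: q[abs_def])
  moreover have "q t \<noteq> 0" "q t \<noteq> 1"
    using nz by (auto simp: q w field_simps)
  ultimately show ?thesis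
    using has_real_derivative_bloch_wigner_log_data by metis
qed

section \<open>Lines on the curve\<close>

lemma E_aff_relations:
  assumes "(x, y) \<in> E_aff"
  shows "(y + 1) * y = x * (x - 1) * (x + 1)"
    and "(y - x + 1) * (x + y) = x * x * (x - 1)"
    and "(y - 2 * x + 2) * (2 * x + y - 1) = (x - 1) * (x - 1) * (x - 2)"
    and "(x + y + 1) * (x - 1) * (x + y) = x * y * (2 * x + y - 1)"
proof -
  have curve: "(y ^ 2 + y) - (x ^ 3 - x) = 0"
    using assms by (simp add: E_aff_def)
  have "(y + 1) * y - x * (x - 1) * (x + 1) = (y ^ 2 + y) - (x ^ 3 - x)"
    and "(y - x + 1) * (x + y) - x * x * (x - 1) = (y ^ 2 + y) - (x ^ 3 - x)"
    and "(y - 2 * x + 2) * (2 * x + y - 1) - (x - 1) * (x - 1) * (x - 2) = (y ^ 2 + y) - (x ^ 3 - x)"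
    and "(x + y + 1) * (x - 1) * (x + y) - x * y * (2 * x + y - 1) = - ((y ^ 2 + y) - (x ^ 3 - x))"
    by (simp_all add: algebra_simps power2_eq_square power3_eq_cube)
  then show "(y + 1) * y = x * (x - 1) * (x + 1)"
    and "(y - x + 1) * (x + y) = x * x * (x - 1)"
    and "(y - 2 * x + 2) * (2 * x + y - 1) = (x - 1) * (x - 1) * (x - 2)"
    and "(x + y + 1) * (x - 1) * (x + y) = x * y * (2 * x + y - 1)"
    unfolding curve by simp_all
qed

lemma E_rat_of_rational_abscissa:
  assumes "(x, y) \<in> E_aff" "x \<in> \<rat>" "r \<in> \<rat>" "r ^ 2 + r = x ^ 3 - x"
  shows "(x, y) \<in> E_rat"
proof -
  have "(y - r) * (y - (- r - 1)) = (y ^ 2 + y) - (r ^ 2 + r)"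
    by (simp add: algebra_simps power2_eq_square)
  also have "\<dots> = 0"
    using assms(1,4) by (simp add: E_aff_def)
  finally have "y = r \<or> y = - r - 1"
    by (simp only: mult_eq_0_iff right_minus_eq)
  then have "y \<in> \<rat>"
    using assms(3) by auto
  with assms(1,2) show ?thesis
    by (simp add: E_rat_def)
qed

lemma E_aff_lines_nonzero:
  assumes "p \<in> E_aff - E_rat"
  shows "fst p \<noteq> 0" "fst p \<noteq> 1" "fst p + 1 \<noteq> 0" "fst p \<noteq> 2"
    and "snd p \<noteq> 0" "snd p + 1 \<noteq> 0" "fst p + snd p \<noteq> 0" "snd p - fst p + 1 \<noteq> 0"
    and "2 * fst p + snd p \<noteq> 1" "snd p - 2 * fst p + 2 \<noteq> 0" "fst p + snd p + 1 \<noteq> 0"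
proof -
  obtain x y where p: "p = (x, y)" and E: "(x, y) \<in> E_aff" and nonrat: "(x, y) \<notin> E_rat"
    using assms by (cases p) auto
  note rel = E_aff_relations[OF E]
  show x: "fst p \<noteq> 0" "fst p \<noteq> 1" "fst p + 1 \<noteq> 0" "fst p \<noteq> 2"
    using E_rat_of_rational_abscissa[OF E, of 0] E_rat_of_rational_abscissa[OF E, of 2] nonrat
    by (auto simp: p simp flip: eq_neg_iff_add_eq_0)
  show "snd p \<noteq> 0" "snd p + 1 \<noteq> 0" "fst p + snd p \<noteq> 0" "snd p - fst p + 1 \<noteq> 0"
    using rel(1,2) x by (auto simp: p simp flip: eq_neg_iff_add_eq_0)
  then show "2 * fst p + snd p \<noteq> 1" "snd p - 2 * fst p + 2 \<noteq> 0" "fst p + snd p + 1 \<noteq> 0"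
    using rel(3,4) x by (auto simp: p simp flip: eq_neg_iff_add_eq_0)
qed

section \<open>Primitives of the regulator forms\<close>

(* The terms are the Steinberg symbols of has_real_derivative_steinberg_terms; the coefficients
   are those of {x1, y1} + 7 {x, y} resp. {x2, y2} + 5 {x, y} as combinations of these symbols. *)
definition eta_primitive_x1y1 :: "complex \<times> complex \<Rightarrow> real" where
  "eta_primitive_x1y1 p = (let x = fst p; y = snd p in
       - 2 * bloch_wigner (- y) - 2 * bloch_wigner ((y + 1) / (x + y))
     + 3 * bloch_wigner ((x + 1) / 2) - bloch_wigner ((2 - x) / 3)
     - bloch_wigner (x + y + 1) - 7 * bloch_wigner (x + 1)
     + bloch_wigner ((x + y + 1) / x) - 3 * bloch_wigner ((x + 1) / (2 * x))
     + bloch_wigner ((2 * x + y - 1) / (2 * (x - 1))) - 3 * bloch_wigner ((x + y + 1) / y)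
     + bloch_wigner (2 * (x - 2) / (3 * (x - 1))) + bloch_wigner (- (x + y + 1) / (y - x + 1)))"

definition eta_primitive_x2y2 :: "complex \<times> complex \<Rightarrow> real" where
  "eta_primitive_x2y2 p = (let x = fst p; y = snd p in
       - bloch_wigner (- y) - 2 * bloch_wigner ((y + 1) / (x + y))
     + 2 * bloch_wigner ((x + 1) / 2) - bloch_wigner (x + y + 1) - 4 * bloch_wigner (x + 1)
     - bloch_wigner ((x + 1) / (2 * x)) + bloch_wigner ((2 * x + y - 1) / (2 * (x - 1)))
     - 2 * bloch_wigner ((x + y + 1) / y) + bloch_wigner (- (x + y + 1) / (y - x + 1)))"

locale curve_path_point =
  fixes \<gamma> :: "real \<Rightarrow> complex \<times> complex" and t :: real
  assumes differentiable_path: "\<gamma> differentiable (at t)"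
    and eventually_on_curve: "eventually (\<lambda>s. \<gamma> s \<in> E_aff) (nhds t)"
    and not_rational: "\<gamma> t \<notin> E_rat"
begin

abbreviation X :: "real \<Rightarrow> complex" where "X \<equiv> \<lambda>s. fst (\<gamma> s)"
abbreviation Y :: "real \<Rightarrow> complex" where "Y \<equiv> \<lambda>s. snd (\<gamma> s)"
abbreviation \<L> :: "(real \<Rightarrow> complex) \<Rightarrow> real \<times> real" where "\<L> u \<equiv> log_data u t"

lemma differentiable_coordinates [simp]: "X differentiable (at t)" "Y differentiable (at t)"
  by (intro differentiable_compose[OF bounded_linear_imp_differentiable differentiable_path]
        bounded_linear_fst bounded_linear_snd)+

lemmas lines_nonzero [simp] =
  E_aff_lines_nonzero[of "\<gamma> t", OF DiffI[OF eventually_nhds_x_imp_x[OF eventually_on_curve] not_rational]]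

lemma log_data_relations:
  "\<L> (\<lambda>s. Y s + 1) = \<L> X + \<L> (\<lambda>s. X s - 1) + \<L> (\<lambda>s. X s + 1) - \<L> Y"
  "\<L> (\<lambda>s. Y s - X s + 1) = \<L> X + \<L> X + \<L> (\<lambda>s. X s - 1) - \<L> (\<lambda>s. X s + Y s)"
  "\<L> (\<lambda>s. Y s - 2 * X s + 2) = \<L> (\<lambda>s. X s - 1) + \<L> (\<lambda>s. X s - 1) + \<L> (\<lambda>s. X s - 2)
                                 - \<L> (\<lambda>s. 2 * X s + Y s - 1)"
  "\<L> (\<lambda>s. X s + Y s + 1) = \<L> X + \<L> Y + \<L> (\<lambda>s. 2 * X s + Y s - 1)
                             - \<L> (\<lambda>s. X s - 1) - \<L> (\<lambda>s. X s + Y s)"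
proof -
  have rel: "eventually (\<lambda>s. P (fst (\<gamma> s)) (snd (\<gamma> s))) (nhds t)"
    if "\<And>x y. (x, y) \<in> E_aff \<Longrightarrow> P x y" for P
    using eventually_on_curve by (rule eventually_mono) (metis that prod.collapse)
  have "\<L> (\<lambda>s. (Y s + 1) * Y s) = \<L> (\<lambda>s. X s * (X s - 1) * (X s + 1))"
    by (rule log_data_cong[OF rel]) (rule E_aff_relations(1))
  then show "\<L> (\<lambda>s. Y s + 1) = \<L> X + \<L> (\<lambda>s. X s - 1) + \<L> (\<lambda>s. X s + 1) - \<L> Y"
    by (simp add: log_data_mult) (simp add: algebra_simps)
  have "\<L> (\<lambda>s. (Y s - X s + 1) * (X s + Y s)) = \<L> (\<lambda>s. X s * X s * (X s - 1))"
    by (rule log_data_cong[OF rel]) (rule E_aff_relations(2))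
  then show "\<L> (\<lambda>s. Y s - X s + 1) = \<L> X + \<L> X + \<L> (\<lambda>s. X s - 1) - \<L> (\<lambda>s. X s + Y s)"
    by (simp add: log_data_mult) (simp add: algebra_simps)
  have "\<L> (\<lambda>s. (Y s - 2 * X s + 2) * (2 * X s + Y s - 1)) = \<L> (\<lambda>s. (X s - 1) * (X s - 1) * (X s - 2))"
    by (rule log_data_cong[OF rel]) (rule E_aff_relations(3))
  then show "\<L> (\<lambda>s. Y s - 2 * X s + 2) = \<L> (\<lambda>s. X s - 1) + \<L> (\<lambda>s. X s - 1) + \<L> (\<lambda>s. X s - 2)
                                 - \<L> (\<lambda>s. 2 * X s + Y s - 1)"
    by (simp add: log_data_mult) (simp add: algebra_simps)
  have "\<L> (\<lambda>s. (X s + Y s + 1) * (X s - 1) * (X s + Y s)) = \<L> (\<lambda>s. X s * Y s * (2 * X s + Y s - 1))"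
    by (rule log_data_cong[OF rel]) (rule E_aff_relations(4))
  then show "\<L> (\<lambda>s. X s + Y s + 1) = \<L> X + \<L> Y + \<L> (\<lambda>s. 2 * X s + Y s - 1)
                             - \<L> (\<lambda>s. X s - 1) - \<L> (\<lambda>s. X s + Y s)"
    by (simp add: log_data_mult) (simp add: algebra_simps)
qed

lemma has_real_derivative_steinberg_terms:
  shows "((\<lambda>s. bloch_wigner (- Y s)) has_real_derivative
           wedge ((ln (cmod (- 1)), 0) + \<L> Y - \<L> (\<lambda>s. 1))
                 ((ln (cmod 1), 0) + \<L> (\<lambda>s. Y s + 1) - \<L> (\<lambda>s. 1))) (at t)"
    and "((\<lambda>s. bloch_wigner ((Y s + 1) / (X s + Y s))) has_real_derivative
           wedge ((ln (cmod 1), 0) + \<L> (\<lambda>s. Y s + 1) - \<L> (\<lambda>s. X s + Y s))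
                 ((ln (cmod 1), 0) + \<L> (\<lambda>s. X s - 1) - \<L> (\<lambda>s. X s + Y s))) (at t)"
    and "((\<lambda>s. bloch_wigner ((X s + 1) / 2)) has_real_derivative
           wedge ((ln (cmod (1/2)), 0) + \<L> (\<lambda>s. X s + 1) - \<L> (\<lambda>s. 1))
                 ((ln (cmod (- 1/2)), 0) + \<L> (\<lambda>s. X s - 1) - \<L> (\<lambda>s. 1))) (at t)"
    and "((\<lambda>s. bloch_wigner ((2 - X s) / 3)) has_real_derivative
           wedge ((ln (cmod (- 1/3)), 0) + \<L> (\<lambda>s. X s - 2) - \<L> (\<lambda>s. 1))
                 ((ln (cmod (1/3)), 0) + \<L> (\<lambda>s. X s + 1) - \<L> (\<lambda>s. 1))) (at t)"
    and "((\<lambda>s. bloch_wigner (X s + Y s + 1)) has_real_derivative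
           wedge ((ln (cmod 1), 0) + \<L> (\<lambda>s. X s + Y s + 1) - \<L> (\<lambda>s. 1))
                 ((ln (cmod (- 1)), 0) + \<L> (\<lambda>s. X s + Y s) - \<L> (\<lambda>s. 1))) (at t)"
    and "((\<lambda>s. bloch_wigner (X s + 1)) has_real_derivative
           wedge ((ln (cmod 1), 0) + \<L> (\<lambda>s. X s + 1) - \<L> (\<lambda>s. 1))
                 ((ln (cmod (- 1)), 0) + \<L> X - \<L> (\<lambda>s. 1))) (at t)"
    and "((\<lambda>s. bloch_wigner ((X s + Y s + 1) / X s)) has_real_derivative
           wedge ((ln (cmod 1), 0) + \<L> (\<lambda>s. X s + Y s + 1) - \<L> X)
                 ((ln (cmod (- 1)), 0) + \<L> (\<lambda>s. Y s + 1) - \<L> X)) (at t)"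
    and "((\<lambda>s. bloch_wigner ((X s + 1) / (2 * X s))) has_real_derivative
           wedge ((ln (cmod (1/2)), 0) + \<L> (\<lambda>s. X s + 1) - \<L> X)
                 ((ln (cmod (1/2)), 0) + \<L> (\<lambda>s. X s - 1) - \<L> X)) (at t)"
    and "((\<lambda>s. bloch_wigner ((2 * X s + Y s - 1) / (2 * (X s - 1)))) has_real_derivative
           wedge ((ln (cmod (1/2)), 0) + \<L> (\<lambda>s. 2 * X s + Y s - 1) - \<L> (\<lambda>s. X s - 1))
                 ((ln (cmod (- 1/2)), 0) + \<L> (\<lambda>s. Y s + 1) - \<L> (\<lambda>s. X s - 1))) (at t)"
    and "((\<lambda>s. bloch_wigner ((X s + Y s + 1) / Y s)) has_real_derivative
           wedge ((ln (cmod 1), 0) + \<L> (\<lambda>s. X s + Y s + 1) - \<L> Y)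
                 ((ln (cmod (- 1)), 0) + \<L> (\<lambda>s. X s + 1) - \<L> Y)) (at t)"
    and "((\<lambda>s. bloch_wigner (2 * (X s - 2) / (3 * (X s - 1)))) has_real_derivative
           wedge ((ln (cmod (2/3)), 0) + \<L> (\<lambda>s. X s - 2) - \<L> (\<lambda>s. X s - 1))
                 ((ln (cmod (1/3)), 0) + \<L> (\<lambda>s. X s + 1) - \<L> (\<lambda>s. X s - 1))) (at t)"
    and "((\<lambda>s. bloch_wigner (- (X s + Y s + 1) / (Y s - X s + 1))) has_real_derivative
           wedge ((ln (cmod (- 1)), 0) + \<L> (\<lambda>s. X s + Y s + 1) - \<L> (\<lambda>s. Y s - X s + 1))
                 ((ln (cmod 2), 0) + \<L> (\<lambda>s. Y s + 1) - \<L> (\<lambda>s. Y s - X s + 1))) (at t)"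
  by (rule has_real_derivative_bloch_wigner_steinberg; simp?; simp add: field_simps)+

(* Once log_data_relations eliminates y + 1, y - x + 1, y - 2x + 2 and x + y + 1, the final step
   is a polynomial identity in log 2, log 3 and the log data of x, x - 1, x + 1, x - 2, y, x + y
   and 2x + y - 1. *)
lemma has_real_derivative_eta_primitive_x1y1:
  "((\<lambda>s. eta_primitive_x1y1 (\<gamma> s)) has_real_derivative
      wedge (\<L> (fx1 \<circ> \<gamma>)) (\<L> (fy1 \<circ> \<gamma>)) + 7 * wedge (\<L> (fx \<circ> \<gamma>)) (\<L> (fy \<circ> \<gamma>))) (at t)"
proof -
  have fun_eqs: "fx1 \<circ> \<gamma> = (\<lambda>s. X s - 1)" "fy1 \<circ> \<gamma> = (\<lambda>s. Y s - 2 * X s + 2)"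
    "fx \<circ> \<gamma> = X" "fy \<circ> \<gamma> = Y"
    by (auto simp: fx1_def fy1_def fx_def fy_def)
  show ?thesis
    unfolding fun_eqs eta_primitive_x1y1_def Let_def
    by (rule DERIV_cong, (rule DERIV_add DERIV_diff DERIV_cmult DERIV_minus has_real_derivative_steinberg_terms)+,
        unfold log_data_relations, simp add: wedge_def ln_div algebra_simps)
qed

lemma has_real_derivative_eta_primitive_x2y2:
  "((\<lambda>s. eta_primitive_x2y2 (\<gamma> s)) has_real_derivative
      wedge (\<L> (fx2 \<circ> \<gamma>)) (\<L> (fy2 \<circ> \<gamma>)) + 5 * wedge (\<L> (fx \<circ> \<gamma>)) (\<L> (fy \<circ> \<gamma>))) (at t)"
proof -
  have fun_eqs: "fx2 \<circ> \<gamma> = (\<lambda>s. X s - 1)" "fy2 \<circ> \<gamma> = (\<lambda>s. Y s - X s + 1)"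
    "fx \<circ> \<gamma> = X" "fy \<circ> \<gamma> = Y"
    by (auto simp: fx2_def fy2_def fx_def fy_def)
  show ?thesis
    unfolding fun_eqs eta_primitive_x2y2_def Let_def
    by (rule DERIV_cong, (rule DERIV_add DERIV_diff DERIV_cmult DERIV_minus has_real_derivative_steinberg_terms)+,
        unfold log_data_relations, simp add: wedge_def ln_div algebra_simps)
qed

end

(* The redundant condition 2 * (y + 1) \<noteq> 0 is the form in which the simplifier states
   -(x + y + 1) / (y - x + 1) \<noteq> 1. *)
definition off_lines :: "(complex \<times> complex) set" where
  "off_lines = {p. fst p \<noteq> 0 \<and> fst p \<noteq> 1 \<and> fst p + 1 \<noteq> 0 \<and> fst p \<noteq> 2 \<and> snd p \<noteq> 0
      \<and> snd p + 1 \<noteq> 0 \<and> 2 * (snd p + 1) \<noteq> 0 \<and> fst p + snd p \<noteq> 0 \<and> snd p - fst p + 1 \<noteq> 0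
      \<and> 2 * fst p + snd p \<noteq> 1 \<and> snd p - 2 * fst p + 2 \<noteq> 0 \<and> fst p + snd p + 1 \<noteq> 0}"

lemma E_aff_minus_E_rat_subset_off_lines: "E_aff - E_rat \<subseteq> off_lines"
proof
  fix p assume p: "p \<in> E_aff - E_rat"
  have "2 * (snd p + 1) \<noteq> 0"
    using E_aff_lines_nonzero(6)[OF p] by (subst mult_eq_0_iff) simp
  with E_aff_lines_nonzero[OF p] show "p \<in> off_lines"
    by (simp add: off_lines_def)
qed

lemma continuous_on_eta_primitive_x1y1: "continuous_on (E_aff - E_rat) eta_primitive_x1y1"
proof (rule continuous_on_subset[OF _ E_aff_minus_E_rat_subset_off_lines])
  show "continuous_on off_lines eta_primitive_x1y1"
    unfolding eta_primitive_x1y1_def Let_def off_lines_def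
    by (intro continuous_intros) (simp_all add: field_simps neg_eq_iff_add_eq_0)
qed

lemma continuous_on_eta_primitive_x2y2: "continuous_on (E_aff - E_rat) eta_primitive_x2y2"
proof (rule continuous_on_subset[OF _ E_aff_minus_E_rat_subset_off_lines])
  show "continuous_on off_lines eta_primitive_x2y2"
    unfolding eta_primitive_x2y2_def Let_def off_lines_def
    by (intro continuous_intros) (simp_all add: field_simps neg_eq_iff_add_eq_0)
qed

section \<open>Integrals over closed paths\<close>

lemma has_integral_derivative_closed_path:
  fixes \<gamma> :: "real \<Rightarrow> 'a::real_normed_vector" and \<Phi> :: "'a \<Rightarrow> real"
  assumes "valid_path \<gamma>" "pathfinish \<gamma> = pathstart \<gamma>" "continuous_on (path_image \<gamma>) \<Phi>"
    and "\<And>t. t \<in> {0<..<1} \<Longrightarrow> \<gamma> differentiable (at t) \<Longrightarrow>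
           ((\<lambda>s. \<Phi> (\<gamma> s)) has_real_derivative \<phi> t) (at t)"
  shows "(\<phi> has_integral 0) {0..1}"
proof -
  obtain K where K: "finite K" "\<gamma> C1_differentiable_on {0..1} - K"
    using assms(1) by (auto simp: valid_path_def piecewise_C1_differentiable_on_def)
  have cont: "continuous_on {0..1} (\<lambda>s. \<Phi> (\<gamma> s))"
    using continuous_on_compose2[OF assms(3) valid_path_imp_path[OF assms(1), unfolded path_def]]
    by (simp add: path_image_def)
  have deriv: "((\<lambda>s. \<Phi> (\<gamma> s)) has_vector_derivative \<phi> t) (at t)" if "t \<in> {0<..<1} - K" for t
  proof -
    have "\<gamma> differentiable (at t)"
      using K(2) that by (simp add: C1_differentiable_on_eq)
    with assms(4) that show ?thesis
      by (simp add: has_real_derivative_iff_has_vector_derivative)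
  qed
  have "(\<phi> has_integral \<Phi> (\<gamma> 1) - \<Phi> (\<gamma> 0)) {0..1}"
    by (rule fundamental_theorem_of_calculus_interior_strong[OF K(1) zero_le_one deriv cont])
  with assms(2) show ?thesis
    by (simp add: pathstart_def pathfinish_def)
qed

lemma integral_eq_of_has_integral_combination_zero:
  fixes f g :: "real \<Rightarrow> real"
  assumes "((\<lambda>t. f t + c * g t) has_integral 0) S" "c \<noteq> 0"
  shows "integral S f = - c * integral S g"
proof (cases "g integrable_on S")
  case True
  then have "((\<lambda>t. (f t + c * g t) - c * g t) has_integral 0 - c * integral S g) S"
    by (intro has_integral_diff assms(1) has_integral_mult_right integrable_integral)
  then show ?thesis
    by (simp add: integral_unique)
next
  case False
  \<comment> \<open>then f is not integrable either, and both integrals are 0 by convention\<close>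
  have "\<not> f integrable_on S"
  proof
    assume "f integrable_on S"
    then have "(\<lambda>t. (f t + c * g t) - f t) integrable_on S"
      using has_integral_integrable[OF assms(1)] by (intro integrable_diff)
    with False assms(2) show False
      by simp
  qed
  with False show ?thesis
    by (simp add: not_integrable_integral)
qed

lemma eta_integral_eq_wedge:
  "eta_integral f g \<gamma> = integral {0..1} (\<lambda>t. wedge (log_data (f \<circ> \<gamma>) t) (log_data (g \<circ> \<gamma>) t))"
  by (simp add: eta_integral_def wedge_def log_data_def mult.commute)

lemma eta_integral_relation:
  assumes "valid_path \<gamma>" "pathfinish \<gamma> = pathstart \<gamma>" "path_image \<gamma> \<subseteq> E_aff - E_rat"
    and "continuous_on (E_aff - E_rat) \<Phi>" "c \<noteq> 0"
    and "\<And>t. curve_path_point \<gamma> t \<Longrightarrow> ((\<lambda>s. \<Phi> (\<gamma> s)) has_real_derivative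
           wedge (log_data (f \<circ> \<gamma>) t) (log_data (g \<circ> \<gamma>) t)
           + c * wedge (log_data (fx \<circ> \<gamma>) t) (log_data (fy \<circ> \<gamma>) t)) (at t)"
  shows "eta_integral f g \<gamma> = - c * eta_integral fx fy \<gamma>"
proof -
  have point: "curve_path_point \<gamma> t" if "t \<in> {0<..<1}" "\<gamma> differentiable (at t)" for t
  proof
    have "eventually (\<lambda>s. s \<in> {0<..<1}) (nhds t)"
      using that(1) by (intro eventually_nhds_in_open) auto
    then show "eventually (\<lambda>s. \<gamma> s \<in> E_aff) (nhds t)"
      by (rule eventually_mono) (use assms(3) in \<open>auto simp: path_image_def image_subset_iff\<close>)
    show "\<gamma> t \<notin> E_rat"
      using that(1) assms(3) by (auto simp: path_image_def image_subset_iff)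
  qed (fact that(2))
  have cont: "continuous_on (path_image \<gamma>) \<Phi>"
    using assms(3,4) by (rule continuous_on_subset[rotated])
  have "((\<lambda>t. wedge (log_data (f \<circ> \<gamma>) t) (log_data (g \<circ> \<gamma>) t)
      + c * wedge (log_data (fx \<circ> \<gamma>) t) (log_data (fy \<circ> \<gamma>) t)) has_integral 0) {0..1}"
    by (rule has_integral_derivative_closed_path[OF assms(1,2) cont]) (simp add: assms(6) point)
  then show ?thesis
    unfolding eta_integral_eq_wedge using assms(5) by (rule integral_eq_of_has_integral_combination_zero)
qed

theorem mainTheorem3:
  fixes \<gamma> :: "real \<Rightarrow> complex \<times> complex"
  assumes "valid_path \<gamma>"
    and "pathfinish \<gamma> = pathstart \<gamma>"
    and "path_image \<gamma> \<subseteq> E_aff - E_rat"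
    and "generate (homology_group 1 E_top) {loop_class E_top \<gamma>} = H1_minus"
  shows "eta_integral fx1 fy1 \<gamma> = - 7 * eta_integral fx fy \<gamma> \<and>
         eta_integral fx2 fy2 \<gamma> = - 5 * eta_integral fx fy \<gamma>"
proof
  show "eta_integral fx1 fy1 \<gamma> = - 7 * eta_integral fx fy \<gamma>"
    using assms(1-3) continuous_on_eta_primitive_x1y1
    by (rule eta_integral_relation) (simp_all add: curve_path_point.has_real_derivative_eta_primitive_x1y1)
  show "eta_integral fx2 fy2 \<gamma> = - 5 * eta_integral fx fy \<gamma>"
    using assms(1-3) continuous_on_eta_primitive_x2y2
    by (rule eta_integral_relation) (simp_all add: curve_path_point.has_real_derivative_eta_primitive_x2y2)
qed

end
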